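(* Let $n\ge2$, let $\mathbb{K}$ be a field of characteristic not $2,3$ containing a primitive $n$-th root of unity $\epsilon_n$, and let $\mathscr{C}_n=\mathbb{K}[z]/(z^n-1)$ with multiplication $p(z)\circ q(z)=p(\epsilon_nz)q(\epsilon_nz)\mod z^n-1$. Let $\Delta(p)=p(1)p(\epsilon_n)\cdots p(\epsilon_n^{n-1})$. If $p$ is a nonzero idempotent of $(\mathscr{C}_n,\circ)$ with $p\not\equiv1$, then $\Delta(p)=1$, and the set of distinct eigenvalues of $L^\circ_p:q\mapsto p\circ q$ is exactly $\{\epsilon_n^i:0\le i\le n-1\}$. In particular, every nonzero idempotent of $\mathscr{C}_n$ is semi-simple.
   Context: An idempotent $p$ is semi-simple if $\mathscr{C}_n$ is the direct sum of the eigenspaces of $L^\circ_p$. *)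

theory Defs
  imports "HOL-Computational_Algebra.Polynomial"
begin

text \<open>The algebra C_n = K[z]/(z^n - 1) is represented by its canonical
representatives: polynomials of degree < n (i.e. reduced mod z^n - 1).\<close>

definition Cn :: "nat \<Rightarrow> 'a::field poly set" where
  "Cn n = {p. p mod (monom 1 n - 1) = p}"

definition circ :: "'a::field \<Rightarrow> nat \<Rightarrow> 'a poly \<Rightarrow> 'a poly \<Rightarrow> 'a poly" where
  "circ e n p q = (pcompose p [:0, e:] * pcompose q [:0, e:]) mod (monom 1 n - 1)"

definition primitive_root :: "nat \<Rightarrow> 'a::field \<Rightarrow> bool" where
  "primitive_root n e \<longleftrightarrow> e ^ n = 1 \<and> (\<forall>k. 0 < k \<and> k < n \<longrightarrow> e ^ k \<noteq> 1)"

definition Delta :: "'a::field \<Rightarrow> nat \<Rightarrow> 'a poly \<Rightarrow> 'a" where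
  "Delta e n p = (\<Prod>i<n. poly p (e ^ i))"

definition idempotent :: "'a::field \<Rightarrow> nat \<Rightarrow> 'a poly \<Rightarrow> bool" where
  "idempotent e n p \<longleftrightarrow> p \<in> Cn n \<and> circ e n p p = p"

definition eigenspace :: "'a::field \<Rightarrow> nat \<Rightarrow> 'a poly \<Rightarrow> 'a \<Rightarrow> 'a poly set" where
  "eigenspace e n p l = {q \<in> Cn n. circ e n p q = smult l q}"

definition eigenvalues :: "'a::field \<Rightarrow> nat \<Rightarrow> 'a poly \<Rightarrow> 'a set" where
  "eigenvalues e n p = {l. \<exists>q \<in> eigenspace e n p l. q \<noteq> 0}"

text \<open>Semi-simple: C_n is the (internal) direct sum of the eigenspaces of L_p,
  i.e. every element decomposes uniquely as a sum of eigenvectors, one from each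
  eigenspace.\<close>
definition semi_simple :: "'a::field \<Rightarrow> nat \<Rightarrow> 'a poly \<Rightarrow> bool" where
  "semi_simple e n p \<longleftrightarrow> finite (eigenvalues e n p) \<and>
     (\<forall>q \<in> Cn n. \<exists>!f. (\<forall>l \<in> eigenvalues e n p. f l \<in> eigenspace e n p l)
        \<and> (\<forall>l. l \<notin> eigenvalues e n p \<longrightarrow> f l = 0)
        \<and> q = (\<Sum>l \<in> eigenvalues e n p. f l))"

end

theory Submission
  imports Defs
begin

(*
  Evaluation at the powers of e identifies C_n with K^n, and
  (p o q)(e^j) = p(e^(j+1)) q(e^(j+1)).  For an idempotent p \<noteq> 0 the values
  a_j = p(e^j) therefore satisfy a_j = a_(j+1)^2, so they are all nonzero and
  Delta(p) = Delta(p)^2 = 1.  In the rescaled coordinates a_1 ... a_j q(e^j), left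
  multiplication by p is the cyclic shift of K^n (it closes up because
  a_1 ... a_n = Delta(p) = 1), whose eigenvalues are the n-th roots of unity, each
  with a line as eigenspace; discrete Fourier inversion over these roots gives the
  eigenspace decomposition.
*)

lemma geometric_sum_root_of_unity:
  fixes x :: "'a::field"
  assumes "x ^ n = 1"
  shows "(\<Sum>i<n. x ^ i) = (if x = 1 then of_nat n else 0)"
  using geometric_sum[of x n] assms by auto

lemma prod_lessThan_Suc_periodic:
  fixes f :: "nat \<Rightarrow> 'a::comm_monoid_mult"
  assumes "f n = f 0"
  shows "(\<Prod>i<n. f (Suc i)) = (\<Prod>i<n. f i)"
proof (cases n)
  case (Suc m)
  have "(\<Prod>i<Suc m. f (Suc i)) = (\<Prod>i<m. f (Suc i)) * f (Suc m)"
    by (rule prod.lessThan_Suc)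
  also have "\<dots> = f 0 * (\<Prod>i<m. f (Suc i))"
    using assms Suc by (simp add: mult.commute)
  also have "\<dots> = (\<Prod>i<Suc m. f i)"
    by (rule prod.lessThan_Suc_shift[symmetric])
  finally show ?thesis
    using Suc by simp
qed simp

lemma smult_eq_smult_iff:
  fixes v :: "'a::idom poly"
  assumes "v \<noteq> 0"
  shows "smult a v = smult b v \<longleftrightarrow> a = b"
proof -
  have "smult a v = smult b v \<longleftrightarrow> smult (a - b) v = 0"
    by (simp add: smult_diff_left)
  with assms show ?thesis by simp
qed

definition lagrange_interpolant :: "(nat \<Rightarrow> 'a::field) \<Rightarrow> (nat \<Rightarrow> 'a) \<Rightarrow> nat \<Rightarrow> 'a poly" where
  "lagrange_interpolant x y n =
     (\<Sum>j<n. smult (y j / (\<Prod>k\<in>{..<n}-{j}. x j - x k)) (\<Prod>k\<in>{..<n}-{j}. [:- x k, 1:]))"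

lemma degree_lagrange_interpolant:
  assumes "0 < n"
  shows "degree (lagrange_interpolant x y n) < n"
proof -
  have "degree (lagrange_interpolant x y n) \<le> n - 1"
    unfolding lagrange_interpolant_def
  proof (rule degree_sum_le)
    fix j assume j: "j \<in> {..<n}"
    have "degree (\<Prod>k\<in>{..<n}-{j}. [:- x k, 1:]) \<le> (\<Sum>k\<in>{..<n}-{j}. degree [:- x k, 1:])"
      using degree_prod_sum_le[of "{..<n}-{j}" "\<lambda>k. [:- x k, 1:]"] by (simp add: o_def)
    also have "\<dots> = n - 1" using j by simp
    finally show "degree (smult (y j / (\<Prod>k\<in>{..<n}-{j}. x j - x k))
                    (\<Prod>k\<in>{..<n}-{j}. [:- x k, 1:])) \<le> n - 1"
      using degree_smult_le order_trans by blast
  qed simp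
  with assms show ?thesis by linarith
qed

lemma poly_lagrange_interpolant:
  assumes "inj_on x {..<n}" "i < n"
  shows "poly (lagrange_interpolant x y n) (x i) = y i"
proof -
  have "poly (smult (y j / (\<Prod>k\<in>{..<n}-{j}. x j - x k)) (\<Prod>k\<in>{..<n}-{j}. [:- x k, 1:])) (x i)
      = (if j = i then y i else 0)" if "j < n" for j
  proof (cases "j = i")
    case True
    have "(\<Prod>k\<in>{..<n}-{i}. x i - x k) \<noteq> 0"
      using assms by (auto simp: inj_on_def)
    with True show ?thesis by (simp add: poly_prod)
  next
    case False
    have "(\<Prod>k\<in>{..<n}-{j}. x i - x k) = 0"
      by (rule prod_zero) (use False assms(2) in auto)
    with False show ?thesis by (simp add: poly_prod)
  qed
  then show ?thesis
    using assms(2) by (simp add: lagrange_interpolant_def poly_sum)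
qed

lemma degree_monom_minus_one:
  assumes "0 < n"
  shows "degree (monom (1::'a::field) n - 1) = n"
proof -
  have "degree (monom (1::'a) n + - 1) = n"
    using assms by (subst degree_add_eq_left) (auto simp: degree_monom_eq)
  then show ?thesis by simp
qed

lemma Cn_iff_degree:
  assumes "0 < n"
  shows "p \<in> Cn n \<longleftrightarrow> degree (p::'a::field poly) < n"
proof
  assume "p \<in> Cn n"
  then have p_mod: "p mod (monom 1 n - 1) = p" by (simp add: Cn_def)
  have "monom (1::'a) n - 1 \<noteq> 0"
    using degree_monom_minus_one[OF assms] assms by (metis degree_0 less_irrefl)
  then have "p = 0 \<or> degree p < degree (monom (1::'a) n - 1)"
    using degree_mod_less p_mod by metis
  then show "degree p < n"
    using assms by (auto simp: degree_monom_minus_one)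
next
  assume "degree p < n"
  then show "p \<in> Cn n"
    by (simp add: Cn_def mod_poly_less degree_monom_minus_one[OF assms])
qed

lemma Cn_mod: "q mod (monom 1 n - 1) \<in> Cn n"
  by (simp add: Cn_def)

lemma Cn_smult: "q \<in> Cn n \<Longrightarrow> smult c q \<in> Cn n"
  by (simp add: Cn_def mod_smult_left)

lemma Cn_sum: "(\<And>x. x \<in> S \<Longrightarrow> f x \<in> Cn n) \<Longrightarrow> sum f S \<in> Cn n"
proof (induction S rule: infinite_finite_induct)
  case (insert x F)
  then show ?case by (simp add: Cn_def poly_mod_add_left)
qed (auto simp: Cn_def)

lemma poly_mod_root_of_unity:
  fixes x :: "'a::field"
  assumes "x ^ n = 1"
  shows "poly (q mod (monom 1 n - 1)) x = poly q x"
proof -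
  have "poly (monom 1 n - 1) x = 0"
    using assms by (simp add: poly_monom)
  then show ?thesis
    by (simp flip: minus_div_mult_eq_mod)
qed

lemma poly_circ:
  fixes x :: "'a::field"
  assumes "x ^ n = 1"
  shows "poly (circ e n p q) x = poly p (e * x) * poly q (e * x)"
  using assms by (simp add: circ_def poly_mod_root_of_unity poly_pcompose mult.commute)

lemma smult_in_eigenspace: "q \<in> eigenspace e n p l \<Longrightarrow> smult c q \<in> eigenspace e n p l"
  by (simp add: eigenspace_def circ_def pcompose_smult Cn_smult mod_smult_left mult.commute)

locale primitive_nth_root =
  fixes e :: "'a::field" and n :: nat
  assumes primitive: "primitive_root n e" and order_pos: "0 < n"
begin

lemma power_order: "e ^ n = 1"
  using primitive by (simp add: primitive_root_def)

lemma root_nonzero: "e \<noteq> 0"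
  using power_order order_pos by (cases n) auto

lemma power_add_order: "e ^ (j + n) = e ^ j"
  by (simp add: power_add power_order)

lemma power_is_root_of_unity: "(e ^ j) ^ n = 1"
  by (metis power_mult mult.commute power_one power_order)

lemma inj_on_power: "inj_on (\<lambda>j. e ^ j) {..<n}"
proof -
  have "e ^ i \<noteq> e ^ j" if "i < j" "j < n" for i j
  proof
    assume "e ^ i = e ^ j"
    moreover have "e ^ j = e ^ i * e ^ (j - i)"
      using \<open>i < j\<close> by (simp flip: power_add)
    ultimately have "e ^ (j - i) = 1" using root_nonzero by simp
    with that primitive show False by (simp add: primitive_root_def)
  qed
  then show ?thesis
    by (intro inj_onI) (metis lessThan_iff linorder_neqE_nat)
qed

lemma roots_of_unity_eq: "{x. x ^ n = 1} = (\<lambda>j. e ^ j) ` {..<n}"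
proof (rule card_seteq[symmetric])
  let ?m = "monom (1::'a) n - 1"
  have "?m \<noteq> 0"
    using degree_monom_minus_one[OF order_pos] order_pos by (metis degree_0 less_irrefl)
  then have "finite {x. poly ?m x = 0}" "card {x. poly ?m x = 0} \<le> n"
    using poly_roots_finite card_poly_roots_bound degree_monom_minus_one[OF order_pos] by metis+
  moreover have "{x. x ^ n = 1} = {x. poly ?m x = 0}"
    by (simp add: poly_monom)
  ultimately show "finite {x::'a. x ^ n = 1}"
    and "card ((\<lambda>j. e ^ j) ` {..<n}) \<ge> card {x::'a. x ^ n = 1}"
    by (simp_all add: card_image[OF inj_on_power])
  show "(\<lambda>j. e ^ j) ` {..<n} \<subseteq> {x. x ^ n = 1}"
    using power_is_root_of_unity by auto
qed

lemma finite_roots_of_unity: "finite {x::'a. x ^ n = 1}"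
  by (simp add: roots_of_unity_eq)

lemma sum_roots_of_unity: "(\<Sum>x | x ^ n = 1. f x) = (\<Sum>j<n. f (e ^ j))"
  by (simp add: roots_of_unity_eq sum.reindex[OF inj_on_power])

lemma Cn_eqI:
  assumes "p \<in> Cn n" "q \<in> Cn n" "\<And>j. j < n \<Longrightarrow> poly p (e ^ j) = poly q (e ^ j)"
  shows "p = q"
proof (rule poly_eqI_degree)
  show "poly p x = poly q x" if "x \<in> (\<lambda>j. e ^ j) ` {..<n}" for x
    using that assms(3) by auto
  show "degree p < card ((\<lambda>j. e ^ j) ` {..<n})" "degree q < card ((\<lambda>j. e ^ j) ` {..<n})"
    using assms(1,2) order_pos by (simp_all add: card_image[OF inj_on_power] Cn_iff_degree)
qed

definition interpolant :: "(nat \<Rightarrow> 'a) \<Rightarrow> 'a poly" where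
  "interpolant y = lagrange_interpolant (\<lambda>j. e ^ j) y n"

lemma interpolant_in_Cn: "interpolant y \<in> Cn n"
  by (simp add: interpolant_def Cn_iff_degree[OF order_pos] degree_lagrange_interpolant[OF order_pos])

lemma poly_interpolant: "j < n \<Longrightarrow> poly (interpolant y) (e ^ j) = y j"
  by (simp add: interpolant_def poly_lagrange_interpolant[OF inj_on_power])

lemma sum_poly_powers:
  assumes "degree q < n"
  shows "(\<Sum>j<n. poly q (e ^ j)) = of_nat n * coeff q 0"
proof -
  have "(\<Sum>j<n. poly q (e ^ j)) = (\<Sum>j<n. \<Sum>k\<le>degree q. coeff q k * (e ^ k) ^ j)"
    by (simp add: poly_altdef flip: power_mult) (simp add: mult.commute)
  also have "\<dots> = (\<Sum>k\<le>degree q. coeff q k * (\<Sum>j<n. (e ^ k) ^ j))"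
    by (subst sum.swap) (simp add: sum_distrib_left)
  also have "\<dots> = (\<Sum>k\<le>degree q. if k = 0 then coeff q 0 * of_nat n else 0)"
  proof (rule sum.cong[OF refl])
    fix k assume "k \<in> {..degree q}"
    then have "e ^ k = 1 \<longleftrightarrow> k = 0"
      using assms primitive by (auto simp: primitive_root_def)
    then show "coeff q k * (\<Sum>j<n. (e ^ k) ^ j) = (if k = 0 then coeff q 0 * of_nat n else 0)"
      by (simp add: geometric_sum_root_of_unity power_is_root_of_unity)
  qed
  finally show ?thesis by simp
qed

lemma of_nat_order_nonzero: "of_nat n \<noteq> (0::'a)"
proof
  assume "of_nat n = (0::'a)"
  define q where "q = interpolant (\<lambda>j. if j = 0 then 1 else 0)"
  have "degree q < n"
    using interpolant_in_Cn order_pos by (simp add: q_def Cn_iff_degree)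
  then have "(\<Sum>j<n. poly q (e ^ j)) = 0"
    using sum_poly_powers \<open>of_nat n = 0\<close> by simp
  moreover have "(\<Sum>j<n. poly q (e ^ j)) = 1"
    using order_pos by (simp add: q_def poly_interpolant)
  ultimately show False by simp
qed

lemma character_orthogonality:
  fixes l m :: 'a
  assumes "l ^ n = 1" "m ^ n = 1"
  shows "(\<Sum>k<n. (l / m) ^ k) = (if l = m then of_nat n else 0)"
proof -
  have "m \<noteq> 0" using assms(2) order_pos by (cases n) auto
  then have "l / m = 1 \<longleftrightarrow> l = m" by (auto simp: field_simps)
  moreover have "(l / m) ^ n = 1" using assms by (simp add: power_divide)
  ultimately show ?thesis by (simp add: geometric_sum_root_of_unity)
qed

lemma character_column_orthogonality:
  assumes "j < n" "k < n"
  shows "(\<Sum>l::'a | l ^ n = 1. l ^ k / l ^ j) = (if k = j then of_nat n else 0)"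
proof -
  have "e ^ k / e ^ j = 1 \<longleftrightarrow> k = j"
    using inj_on_power assms root_nonzero by (auto simp: inj_on_def)
  moreover have "(e ^ k / e ^ j) ^ n = 1"
    by (simp add: power_divide power_is_root_of_unity)
  moreover have "(\<Sum>l | l ^ n = 1. l ^ k / l ^ j) = (\<Sum>i<n. (e ^ k / e ^ j) ^ i)"
    by (simp add: sum_roots_of_unity power_divide flip: power_mult) (simp add: mult.commute)
  ultimately show ?thesis
    using geometric_sum_root_of_unity[of "e ^ k / e ^ j" n] by presburger
qed

lemma fourier_transform_iff:
  fixes b :: "nat \<Rightarrow> 'a" and s :: "'a \<Rightarrow> 'a"
  shows "(\<forall>k<n. b k = (\<Sum>l | l ^ n = 1. s l * l ^ k)) \<longleftrightarrow>
         (\<forall>m. m ^ n = 1 \<longrightarrow> s m = (\<Sum>k<n. b k / m ^ k) / of_nat n)"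
proof safe
  fix m :: 'a assume b: "\<forall>k<n. b k = (\<Sum>l | l ^ n = 1. s l * l ^ k)" and m: "m ^ n = 1"
  have "(\<Sum>k<n. b k / m ^ k) = (\<Sum>l | l ^ n = 1. s l * (\<Sum>k<n. (l / m) ^ k))"
    using b by (simp add: sum_divide_distrib sum_distrib_left power_divide sum.swap[of _ "{..<n}"])
  also have "\<dots> = (\<Sum>l | l ^ n = 1. if l = m then s m * of_nat n else 0)"
    by (rule sum.cong) (auto simp: character_orthogonality m)
  also have "\<dots> = s m * of_nat n"
    using m by (simp add: finite_roots_of_unity)
  finally show "s m = (\<Sum>k<n. b k / m ^ k) / of_nat n"
    using of_nat_order_nonzero by simp
next
  fix k assume s: "\<forall>m. m ^ n = 1 \<longrightarrow> s m = (\<Sum>k<n. b k / m ^ k) / of_nat n" and "k < n"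
  have "(\<Sum>l | l ^ n = 1. s l * l ^ k)
      = (\<Sum>j<n. b j * (\<Sum>l | l ^ n = 1. l ^ k / l ^ j)) / of_nat n"
    using s by (simp add: sum_divide_distrib sum_distrib_left sum_distrib_right sum.swap[of _ "{..<n}"])
  also have "\<dots> = (\<Sum>j<n. if j = k then b k * of_nat n else 0) / of_nat n"
    by (rule arg_cong[where f = "\<lambda>x. x / of_nat n"], rule sum.cong)
       (auto simp: character_column_orthogonality \<open>k < n\<close>)
  also have "\<dots> = b k"
    using \<open>k < n\<close> of_nat_order_nonzero by simp
  finally show "b k = (\<Sum>l | l ^ n = 1. s l * l ^ k)" ..
qed

end

locale nonzero_idempotent = primitive_nth_root e n for e :: "'a::field" and n +
  fixes p :: "'a poly"
  assumes p_idempotent: "idempotent e n p" and p_nonzero: "p \<noteq> 0"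
begin

definition val :: "nat \<Rightarrow> 'a" where
  "val j = poly p (e ^ j)"

lemma val_periodic: "val (j + n) = val j"
  by (simp add: val_def power_add_order)

lemma val_eq_square: "val j = val (Suc j) ^ 2"
proof -
  have "circ e n p p = p"
    using p_idempotent by (simp add: idempotent_def)
  then show ?thesis
    using poly_circ[OF power_is_root_of_unity, where e = e and p = p and q = p]
    by (simp add: val_def power2_eq_square)
qed

lemma val_nonzero: "val j \<noteq> 0"
proof
  assume "val j = 0"
  have vanish_after_j: "val (j + k) = 0" for k
  proof (induction k)
    case (Suc k)
    then show ?case
      using val_eq_square[of "j + k"] by simp
  qed (use \<open>val j = 0\<close> in simp)
  have "val (i + t * n) = val i" for i t
  proof (induction t)
    case (Suc t)
    then show ?case
      using val_periodic[of "i + t * n"] by (simp add: ac_simps)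
  qed simp
  moreover have "j \<le> i + j * n" for i
    using order_pos by (simp add: trans_le_add2)
  ultimately have "val i = 0" for i
    using vanish_after_j by (metis le_add_diff_inverse)
  then have "p = 0"
    using p_idempotent by (intro Cn_eqI) (auto simp: idempotent_def val_def Cn_def)
  with p_nonzero show False ..
qed

lemma prod_val_shift: "(\<Prod>j<n. val (Suc j)) = (\<Prod>j<n. val j)"
  using val_periodic[of 0] by (intro prod_lessThan_Suc_periodic) simp

lemma Delta_eq_prod_val: "Delta e n p = (\<Prod>j<n. val j)"
  by (simp add: Delta_def val_def)

lemma Delta_eq_1: "Delta e n p = 1"
proof -
  have "(\<Prod>j<n. val j) = (\<Prod>j<n. val (Suc j) ^ 2)"
    using val_eq_square by (rule prod.cong[OF refl])
  also have "\<dots> = (\<Prod>j<n. val j) ^ 2"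
    by (simp only: prod_power_distrib[symmetric] prod_val_shift)
  finally show ?thesis
    using val_nonzero by (simp add: Delta_eq_prod_val power2_eq_square)
qed

(* In the coordinates weight j * poly q (e ^ j), left multiplication by p is the cyclic
   shift; weight_order says the shift closes up after n steps. *)
definition weight :: "nat \<Rightarrow> 'a" where
  "weight j = (\<Prod>i<j. val (Suc i))"

lemma weight_0 [simp]: "weight 0 = 1"
  by (simp add: weight_def)

lemma weight_Suc: "weight (Suc j) = weight j * val (Suc j)"
  by (simp add: weight_def)

lemma weight_nonzero: "weight j \<noteq> 0"
  by (simp add: weight_def val_nonzero)

lemma weight_order: "weight n = 1"
  using Delta_eq_1 by (simp add: weight_def prod_val_shift Delta_eq_prod_val)

lemma eigenspace_iff:
  "q \<in> eigenspace e n p l \<longleftrightarrow>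
     q \<in> Cn n \<and> (\<forall>j<n. val (Suc j) * poly q (e ^ Suc j) = l * poly q (e ^ j))"
proof -
  have poly_Lp: "poly (circ e n p q) (e ^ j) = val (Suc j) * poly q (e ^ Suc j)" for j
    by (simp add: poly_circ[OF power_is_root_of_unity] val_def)
  have "circ e n p q = smult l q \<longleftrightarrow> (\<forall>j<n. poly (circ e n p q) (e ^ j) = l * poly q (e ^ j))"
    if "q \<in> Cn n"
    using that by (auto intro: Cn_eqI simp: circ_def Cn_mod Cn_smult)
  then show ?thesis
    by (auto simp: eigenspace_def poly_Lp)
qed

lemma weight_mult_poly_eigenvector:
  assumes "q \<in> eigenspace e n p l" "j \<le> n"
  shows "weight j * poly q (e ^ j) = l ^ j * poly q 1"
  using assms(2)
proof (induction j)
  case (Suc j)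
  have "weight (Suc j) * poly q (e ^ Suc j) = weight j * (val (Suc j) * poly q (e ^ Suc j))"
    by (simp add: weight_Suc)
  also have "\<dots> = l * (weight j * poly q (e ^ j))"
    using assms(1) Suc.prems by (simp add: eigenspace_iff)
  finally show ?case
    using Suc by simp
qed simp

definition eigenvector :: "'a \<Rightarrow> 'a poly" where
  "eigenvector l = interpolant (\<lambda>j. l ^ j / weight j)"

lemma poly_eigenvector: "j < n \<Longrightarrow> poly (eigenvector l) (e ^ j) = l ^ j / weight j"
  by (simp add: eigenvector_def poly_interpolant)

lemma eigenvector_nonzero: "eigenvector l \<noteq> 0"
  using poly_eigenvector[OF order_pos, of l] by auto

lemma eigenspace_eq_smult_eigenvector:
  assumes "q \<in> eigenspace e n p l"
  shows "q = smult (poly q 1) (eigenvector l)"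
proof (rule Cn_eqI)
  show "q \<in> Cn n" "smult (poly q 1) (eigenvector l) \<in> Cn n"
    using assms by (simp_all add: eigenspace_def eigenvector_def Cn_smult interpolant_in_Cn)
  show "poly q (e ^ j) = poly (smult (poly q 1) (eigenvector l)) (e ^ j)" if "j < n" for j
    using weight_mult_poly_eigenvector[OF assms, of j] that weight_nonzero[of j]
    by (simp add: poly_eigenvector field_simps)
qed

lemma eigenvector_in_eigenspace:
  assumes "l ^ n = 1"
  shows "eigenvector l \<in> eigenspace e n p l"
  unfolding eigenspace_iff
proof (intro conjI allI impI)
  show "eigenvector l \<in> Cn n"
    by (simp add: eigenvector_def interpolant_in_Cn)
  fix j assume "j < n"
  have "poly (eigenvector l) (e ^ Suc j) = l ^ Suc j / weight (Suc j)"
  proof (cases "Suc j < n")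
    case False
    then have "Suc j = n" using \<open>j < n\<close> by simp
    then show ?thesis
      using poly_eigenvector[OF order_pos] by (simp add: power_order assms weight_order)
  qed (rule poly_eigenvector)
  then show "val (Suc j) * poly (eigenvector l) (e ^ Suc j) = l * poly (eigenvector l) (e ^ j)"
    using \<open>j < n\<close> val_nonzero[of "Suc j"] weight_nonzero[of j]
    by (simp add: poly_eigenvector weight_Suc field_simps)
qed

lemma eigenvalue_root_of_unity:
  assumes "l \<in> eigenvalues e n p"
  shows "l ^ n = 1"
proof -
  obtain q where q: "q \<in> eigenspace e n p l" "q \<noteq> 0"
    using assms by (auto simp: eigenvalues_def)
  then have "poly q 1 \<noteq> 0"
    using eigenspace_eq_smult_eigenvector by force
  moreover have "poly q 1 = l ^ n * poly q 1"
    using weight_mult_poly_eigenvector[OF q(1), of n] by (simp add: weight_order power_order)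
  ultimately show ?thesis by simp
qed

lemma eigenvalues_eq_roots_of_unity: "eigenvalues e n p = {l. l ^ n = 1}"
  using eigenvalue_root_of_unity eigenvector_in_eigenspace eigenvector_nonzero
  by (fastforce simp: eigenvalues_def)

(* The discrete Fourier coefficients of q in the rescaled coordinates. *)
definition eigencoeff :: "'a poly \<Rightarrow> 'a \<Rightarrow> 'a" where
  "eigencoeff q l = (\<Sum>k<n. weight k * poly q (e ^ k) / l ^ k) / of_nat n"

lemma sum_eigenspaces_iff:
  assumes q: "q \<in> Cn n" and g: "\<And>l. l ^ n = 1 \<Longrightarrow> g l \<in> eigenspace e n p l"
  shows "q = (\<Sum>l | l ^ n = 1. g l) \<longleftrightarrow>
         (\<forall>l. l ^ n = 1 \<longrightarrow> g l = smult (eigencoeff q l) (eigenvector l))"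
proof -
  define s where "s l = poly (g l) 1" for l
  have g_eq: "g l = smult (s l) (eigenvector l)" if "l ^ n = 1" for l
    unfolding s_def using g[OF that] by (rule eigenspace_eq_smult_eigenvector)
  have poly_sum_g: "poly (\<Sum>l | l ^ n = 1. g l) (e ^ k) = (\<Sum>l | l ^ n = 1. s l * l ^ k) / weight k"
    if "k < n" for k
    unfolding poly_sum sum_divide_distrib
    by (rule sum.cong) (simp_all add: g_eq poly_eigenvector that)
  have "(\<Sum>l | l ^ n = 1. g l) \<in> Cn n"
    using g by (intro Cn_sum) (simp add: eigenspace_def)
  then have "q = (\<Sum>l | l ^ n = 1. g l) \<longleftrightarrow>
        (\<forall>k<n. poly q (e ^ k) = poly (\<Sum>l | l ^ n = 1. g l) (e ^ k))"
    using Cn_eqI[OF q] by auto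
  also have "\<dots> \<longleftrightarrow> (\<forall>k<n. weight k * poly q (e ^ k) = (\<Sum>l | l ^ n = 1. s l * l ^ k))"
    using weight_nonzero by (simp add: poly_sum_g eq_divide_eq mult.commute)
  also have "\<dots> \<longleftrightarrow> (\<forall>l. l ^ n = 1 \<longrightarrow> s l = eigencoeff q l)"
    unfolding eigencoeff_def by (rule fourier_transform_iff)
  also have "\<dots> \<longleftrightarrow> (\<forall>l. l ^ n = 1 \<longrightarrow> g l = smult (eigencoeff q l) (eigenvector l))"
    using eigenvector_nonzero by (auto simp: g_eq smult_eq_smult_iff)
  finally show ?thesis .
qed

lemma semi_simple: "semi_simple e n p"
  unfolding semi_simple_def eigenvalues_eq_roots_of_unity
proof (intro conjI ballI finite_roots_of_unity)
  fix q :: "'a poly" assume q: "q \<in> Cn n"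
  define f where "f l = (if l ^ n = 1 then smult (eigencoeff q l) (eigenvector l) else 0)" for l
  have f_eigen: "f l \<in> eigenspace e n p l" if "l ^ n = 1" for l
    using that by (simp add: f_def smult_in_eigenspace eigenvector_in_eigenspace)
  show "\<exists>!f. (\<forall>l\<in>{l. l ^ n = 1}. f l \<in> eigenspace e n p l) \<and>
              (\<forall>l. l \<notin> {l. l ^ n = 1} \<longrightarrow> f l = 0) \<and> q = sum f {l. l ^ n = 1}"
  proof (rule ex1I[of _ f])
    show "(\<forall>l\<in>{l. l ^ n = 1}. f l \<in> eigenspace e n p l) \<and>
          (\<forall>l. l \<notin> {l. l ^ n = 1} \<longrightarrow> f l = 0) \<and> q = sum f {l. l ^ n = 1}"
      using f_eigen sum_eigenspaces_iff[OF q f_eigen] by (auto simp: f_def)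
  next
    fix g assume "(\<forall>l\<in>{l. l ^ n = 1}. g l \<in> eigenspace e n p l) \<and>
          (\<forall>l. l \<notin> {l. l ^ n = 1} \<longrightarrow> g l = 0) \<and> q = sum g {l. l ^ n = 1}"
    then show "g = f"
      using sum_eigenspaces_iff[OF q, of g] by (auto simp: f_def)
  qed
qed

end

theorem proposition7p2:
  fixes e :: "'a::field" and n :: nat
  assumes "n \<ge> 2"
    and "CHAR('a) \<noteq> 2" and "CHAR('a) \<noteq> 3"
    and "primitive_root n e"
  shows "(\<forall>p. idempotent e n p \<and> p \<noteq> 0 \<and> p \<noteq> 1 \<longrightarrow>
            Delta e n p = 1 \<and> eigenvalues e n p = {e ^ i | i. i < n})
       \<and> (\<forall>p. idempotent e n p \<and> p \<noteq> 0 \<longrightarrow> semi_simple e n p)"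
proof (intro conjI allI impI)
  fix p assume "idempotent e n p \<and> p \<noteq> 0 \<and> p \<noteq> 1"
  then interpret nonzero_idempotent e n p
    using assms by unfold_locales auto
  show "Delta e n p = 1"
    by (rule Delta_eq_1)
  show "eigenvalues e n p = {e ^ i | i. i < n}"
    by (auto simp: eigenvalues_eq_roots_of_unity roots_of_unity_eq)
next
  fix p assume "idempotent e n p \<and> p \<noteq> 0"
  then interpret nonzero_idempotent e n p
    using assms by unfold_locales auto
  show "semi_simple e n p"
    by (rule semi_simple)
qed

end
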